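(* Let $X=\{X_t\}_{t\in\mathbb T^d}$ be a measurable stationary random field which is positively dependent (associated). Then $X$ is ergodic if and only if it is weakly mixing.
   Context: $\mathbb T\in\{\mathbb Z,\mathbb R\}$, $\lambda$ counting/Lebesgue measure, $B(T)=(-T,T]^d\cap\mathbb T^d$, $C(T)=(2T)^d$. Associated: for all $t_1,\dots,t_n$ and all coordinatewise non-decreasing $g_1,g_2$ for which the covariance is defined, $\mathrm{Cov}(g_1(X_{t_1},\dots,X_{t_n}),g_2(X_{t_1},\dots,X_{t_n}))\ge0$. With $X_t=X_0\circ\theta_t$, $\theta$ a measure-preserving $\mathbb T^d$-action on $(\Omega,\mathcal F,\mathbb P)$, $\sigma_X=\sigma(X_t)$: ergodic means $\frac1{C(T)}\int_{B(T)}\mathbb P(A\cap\theta_t(B))\lambda(dt)\to\mathbb P(A)\mathbb P(B)$ for all $A,B\in\sigma_X$; weakly mixing means $\frac1{C(T)}\int_{B(T)}|\mathbb P(A\cap\theta_t(B))-\mathbb P(A)\mathbb P(B)|\lambda(dt)\to0$ for all $A,B\in\sigma_X$ (equivalently, convergence $\mathbb P(A\cap\theta_{t_n}(B))\to\mathbb P(A)\mathbb P(B)$ along all sequences in some density-one set tending to infinity). *)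

theory Defs
  imports "HOL-Probability.Probability"
begin

definition mp_action :: "'a measure \<Rightarrow> ('t::monoid_add \<Rightarrow> 'a \<Rightarrow> 'a) \<Rightarrow> bool" where
  "mp_action M \<theta> \<longleftrightarrow>
     (\<forall>t. \<theta> t \<in> M \<rightarrow>\<^sub>M M \<and> distr M M (\<theta> t) = M) \<and>
     (\<forall>\<omega>\<in>space M. \<theta> 0 \<omega> = \<omega>) \<and>
     (\<forall>s t. \<forall>\<omega>\<in>space M. \<theta> (s + t) \<omega> = \<theta> s (\<theta> t \<omega>))"

definition field_of :: "('a \<Rightarrow> real) \<Rightarrow> ('t \<Rightarrow> 'a \<Rightarrow> 'a) \<Rightarrow> 't \<Rightarrow> 'a \<Rightarrow> real" where
  "field_of X0 \<theta> t \<omega> = X0 (\<theta> t \<omega>)"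

definition measurable_field :: "'t measure \<Rightarrow> 'a measure \<Rightarrow> ('t \<Rightarrow> 'a \<Rightarrow> real) \<Rightarrow> bool" where
  "measurable_field L M X \<longleftrightarrow> (\<lambda>(t, \<omega>). X t \<omega>) \<in> borel_measurable (L \<Otimes>\<^sub>M M)"

definition sigmaX :: "'a measure \<Rightarrow> ('t \<Rightarrow> 'a \<Rightarrow> real) \<Rightarrow> 'a set set" where
  "sigmaX M X = sigma_sets (space M) {X t -` S \<inter> space M | t S. S \<in> sets borel}"

definition associated :: "'a measure \<Rightarrow> ('t \<Rightarrow> 'a \<Rightarrow> real) \<Rightarrow> bool" where
  "associated M X \<longleftrightarrow>
     (\<forall>(ts :: 't list) (g1 :: real list \<Rightarrow> real) (g2 :: real list \<Rightarrow> real).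
        (\<forall>xs ys. length xs = length ts \<longrightarrow> list_all2 (\<le>) xs ys \<longrightarrow>
              g1 xs \<le> g1 ys \<and> g2 xs \<le> g2 ys) \<and>
        integrable M (\<lambda>\<omega>. g1 (map (\<lambda>t. X t \<omega>) ts)) \<and>
        integrable M (\<lambda>\<omega>. g2 (map (\<lambda>t. X t \<omega>) ts)) \<and>
        integrable M (\<lambda>\<omega>. g1 (map (\<lambda>t. X t \<omega>) ts) * g2 (map (\<lambda>t. X t \<omega>) ts))
        \<longrightarrow>
        (\<integral>\<omega>. g1 (map (\<lambda>t. X t \<omega>) ts) * g2 (map (\<lambda>t. X t \<omega>) ts) \<partial>M)
          - (\<integral>\<omega>. g1 (map (\<lambda>t. X t \<omega>) ts) \<partial>M) * (\<integral>\<omega>. g2 (map (\<lambda>t. X t \<omega>) ts) \<partial>M) \<ge> 0)"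

text \<open>Ergodicity / weak mixing relative to an index measure L (counting or Lebesgue),
  boxes B(T) and normalisation C(T) = (2T)^d.\<close>
definition ergodic_field ::
  "'t measure \<Rightarrow> (real \<Rightarrow> 't set) \<Rightarrow> nat \<Rightarrow> 'a measure \<Rightarrow> ('t \<Rightarrow> 'a \<Rightarrow> 'a) \<Rightarrow> ('t \<Rightarrow> 'a \<Rightarrow> real) \<Rightarrow> bool" where
  "ergodic_field L B d M \<theta> X \<longleftrightarrow>
     (\<forall>A\<in>sigmaX M X. \<forall>E\<in>sigmaX M X.
        ((\<lambda>T. set_lebesgue_integral L (B T) (\<lambda>t. measure M (A \<inter> \<theta> t ` E)) / (2 * T) ^ d)
           \<longlongrightarrow> measure M A * measure M E) at_top)"

definition weakly_mixing_field ::
  "'t measure \<Rightarrow> (real \<Rightarrow> 't set) \<Rightarrow> nat \<Rightarrow> 'a measure \<Rightarrow> ('t \<Rightarrow> 'a \<Rightarrow> 'a) \<Rightarrow> ('t \<Rightarrow> 'a \<Rightarrow> real) \<Rightarrow> bool" where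
  "weakly_mixing_field L B d M \<theta> X \<longleftrightarrow>
     (\<forall>A\<in>sigmaX M X. \<forall>E\<in>sigmaX M X.
        ((\<lambda>T. set_lebesgue_integral L (B T)
                 (\<lambda>t. \<bar>measure M (A \<inter> \<theta> t ` E) - measure M A * measure M E\<bar>) / (2 * T) ^ d)
           \<longlongrightarrow> 0) at_top)"

definition boxZ :: "real \<Rightarrow> (int ^ 'n) set" where
  "boxZ T = {t. \<forall>i. - T < real_of_int (t $ i) \<and> real_of_int (t $ i) \<le> T}"

definition boxR :: "real \<Rightarrow> (real ^ 'n) set" where
  "boxR T = {t. \<forall>i. - T < t $ i \<and> t $ i \<le> T}"

end

theory Submission
  imports Defs "HOL-Real_Asymp.Real_Asymp"
begin

(* Write corr A E t = P(A \<inter> \<theta>_t E) - P(A) P(E).  Ergodicity says that the box averages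
   of corr A E tend to 0, weak mixing that the box averages of |corr A E| do, for all
   A, E in the sigma-algebra of the field.  Weak mixing trivially implies ergodicity.
   Conversely, if A and E are upper orthant events {X_s1 > a1, ..., X_sn > an}, then so
   is \<theta>_t E, and association gives corr A E t \<ge> 0, so the two averages coincide.
   The orthant events form an intersection-stable generator of the sigma-algebra, and
   the functions whose averages of absolute values vanish ("Cesaro-null" functions)
   are closed under sums, negation and uniform limits, while corr is additive and
   Lipschitz in each event; a Dynkin argument therefore extends Cesaro-nullity from
   orthants to all events, first in A and then in E. *)

locale box_average =
  fixes L :: "'t measure" and B :: "real \<Rightarrow> 't set" and d :: nat
  assumes box_sets: "\<And>T. B T \<in> sets L"
    and box_finite: "\<And>T. emeasure L (B T) < \<infinity>"
    and box_volume: "((\<lambda>T. measure L (B T) / (2 * T) ^ d) \<longlongrightarrow> 1) at_top"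
begin

definition avg :: "('t \<Rightarrow> real) \<Rightarrow> real \<Rightarrow> real" where
  "avg \<phi> T = (LINT t:B T|L. \<phi> t) / (2 * T) ^ d"

definition bounded_measurable :: "('t \<Rightarrow> real) \<Rightarrow> bool" where
  "bounded_measurable \<phi> \<longleftrightarrow> \<phi> \<in> borel_measurable L \<and> (\<exists>C. \<forall>t. \<bar>\<phi> t\<bar> \<le> C)"

text \<open>A bounded measurable function is Cesaro-null if the box averages of its absolute
  value tend to 0, i.e. it is small outside an index set of density zero.\<close>
definition cesaro_null :: "('t \<Rightarrow> real) \<Rightarrow> bool" where
  "cesaro_null \<phi> \<longleftrightarrow> bounded_measurable \<phi> \<and> ((\<lambda>T. avg (\<lambda>t. \<bar>\<phi> t\<bar>) T) \<longlongrightarrow> 0) at_top"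

lemma bounded_measurableI:
  "\<phi> \<in> borel_measurable L \<Longrightarrow> (\<And>t. \<bar>\<phi> t\<bar> \<le> C) \<Longrightarrow> bounded_measurable \<phi>"
  unfolding bounded_measurable_def by blast

lemma bounded_measurable_abs: "bounded_measurable \<phi> \<Longrightarrow> bounded_measurable (\<lambda>t. \<bar>\<phi> t\<bar>)"
  unfolding bounded_measurable_def by auto

lemma bounded_measurable_add:
  assumes "bounded_measurable \<phi>" "bounded_measurable \<psi>"
  shows "bounded_measurable (\<lambda>t. \<phi> t + \<psi> t)"
proof -
  obtain C C' where "\<forall>t. \<bar>\<phi> t\<bar> \<le> C" "\<forall>t. \<bar>\<psi> t\<bar> \<le> C'"
    using assms unfolding bounded_measurable_def by blast
  then have "\<bar>\<phi> t + \<psi> t\<bar> \<le> C + C'" for t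
    by (meson abs_triangle_ineq add_mono order_trans)
  then show ?thesis using assms unfolding bounded_measurable_def by auto
qed

lemma bounded_measurable_const: "bounded_measurable (\<lambda>_. c)"
  by (rule bounded_measurableI[of _ "\<bar>c\<bar>"]) auto

lemma set_integrable_box: "bounded_measurable \<phi> \<Longrightarrow> set_integrable L (B T) \<phi>"
proof -
  assume "bounded_measurable \<phi>"
  then obtain C where m: "\<phi> \<in> borel_measurable L" and C: "\<forall>t. \<bar>\<phi> t\<bar> \<le> C"
    unfolding bounded_measurable_def by blast
  have "set_integrable L (B T) (\<lambda>_. C)"
    unfolding set_integrable_def
    using integrable_real_indicator[OF box_sets box_finite, of T] by (simp add: integrable_mult_left)
  then show ?thesis
    by (rule set_integrable_bound)
       (use m box_sets C in \<open>auto simp: set_borel_measurable_def intro!: AE_I2 order_trans[OF _ abs_ge_self]\<close>)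
qed

definition volume_ratio :: "real \<Rightarrow> real" where
  "volume_ratio T = measure L (B T) / (2 * T) ^ d"

lemma volume_ratio_tendsto: "(volume_ratio \<longlongrightarrow> 1) at_top"
  using box_volume unfolding volume_ratio_def[abs_def] .

lemma avg_const: "avg (\<lambda>_. c) T = c * volume_ratio T"
  unfolding avg_def volume_ratio_def using set_integral_const[OF box_sets, of T c] box_finite[of T] by simp

lemma avg_add:
  "bounded_measurable \<phi> \<Longrightarrow> bounded_measurable \<psi> \<Longrightarrow> avg (\<lambda>t. \<phi> t + \<psi> t) T = avg \<phi> T + avg \<psi> T"
  unfolding avg_def by (simp add: set_integrable_box add_divide_distrib)

lemma avg_mono:
  "T > 0 \<Longrightarrow> bounded_measurable \<phi> \<Longrightarrow> bounded_measurable \<psi> \<Longrightarrow> (\<And>t. \<phi> t \<le> \<psi> t) \<Longrightarrow> avg \<phi> T \<le> avg \<psi> T"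
  unfolding avg_def by (intro divide_right_mono set_integral_mono set_integrable_box) auto

lemma avg_abs_le: "T > 0 \<Longrightarrow> bounded_measurable \<phi> \<Longrightarrow> \<bar>avg \<phi> T\<bar> \<le> avg (\<lambda>t. \<bar>\<phi> t\<bar>) T"
  unfolding avg_def using set_integral_norm_bound[OF set_integrable_box, of \<phi> T]
  by (simp add: abs_divide divide_right_mono)

lemma avg_nonneg: "T > 0 \<Longrightarrow> bounded_measurable \<phi> \<Longrightarrow> (\<And>t. \<phi> t \<ge> 0) \<Longrightarrow> avg \<phi> T \<ge> 0"
  using avg_mono[of T "\<lambda>_. 0" \<phi>] by (simp add: avg_const bounded_measurable_const)

lemma cesaro_null_avg:
  assumes "cesaro_null \<phi>"
  shows "(avg \<phi> \<longlongrightarrow> 0) at_top"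
proof (rule tendsto_0_le[of _ _ _ 1])
  show "((\<lambda>T. avg (\<lambda>t. \<bar>\<phi> t\<bar>) T) \<longlongrightarrow> 0) at_top"
    using assms unfolding cesaro_null_def by blast
  show "\<forall>\<^sub>F T in at_top. norm (avg \<phi> T) \<le> norm (avg (\<lambda>t. \<bar>\<phi> t\<bar>) T) * 1"
    using eventually_gt_at_top[of "0::real"]
  proof eventually_elim
    case (elim T)
    have "\<bar>avg \<phi> T\<bar> \<le> avg (\<lambda>t. \<bar>\<phi> t\<bar>) T"
      using avg_abs_le[OF elim] assms unfolding cesaro_null_def by blast
    then show ?case by simp
  qed
qed

lemma cesaro_null_0: "cesaro_null (\<lambda>_. 0)"
proof -
  have "avg (\<lambda>_. 0) = (\<lambda>_. 0)"
    by (simp add: fun_eq_iff avg_const)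
  then show ?thesis unfolding cesaro_null_def by (simp add: bounded_measurable_const)
qed

lemma cesaro_null_dominated:
  assumes null: "cesaro_null \<psi>" and m: "\<phi> \<in> borel_measurable L" and le: "\<And>t. \<bar>\<phi> t\<bar> \<le> \<bar>\<psi> t\<bar>"
  shows "cesaro_null \<phi>"
proof -
  obtain C where C: "\<forall>t. \<bar>\<psi> t\<bar> \<le> C"
    using null unfolding cesaro_null_def bounded_measurable_def by blast
  have bm: "bounded_measurable \<phi>"
    by (rule bounded_measurableI[OF m, of C]) (use le C in \<open>blast intro: order_trans\<close>)
  have "((\<lambda>T. avg (\<lambda>t. \<bar>\<phi> t\<bar>) T) \<longlongrightarrow> 0) at_top"
  proof (rule tendsto_sandwich[of "\<lambda>_. 0"])
    show "\<forall>\<^sub>F T in at_top. 0 \<le> avg (\<lambda>t. \<bar>\<phi> t\<bar>) T"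
      using eventually_gt_at_top[of "0::real"]
      by eventually_elim (simp add: avg_nonneg bm bounded_measurable_abs)
    show "\<forall>\<^sub>F T in at_top. avg (\<lambda>t. \<bar>\<phi> t\<bar>) T \<le> avg (\<lambda>t. \<bar>\<psi> t\<bar>) T"
      using eventually_gt_at_top[of "0::real"]
    proof eventually_elim
      case (elim T)
      show ?case
        by (rule avg_mono[OF elim]) (use bm null le in \<open>auto simp: bounded_measurable_abs cesaro_null_def\<close>)
    qed
  qed (use null in \<open>auto simp: cesaro_null_def\<close>)
  with bm show ?thesis unfolding cesaro_null_def by blast
qed

lemma cesaro_null_uminus: "cesaro_null \<phi> \<Longrightarrow> cesaro_null (\<lambda>t. - \<phi> t)"
  by (rule cesaro_null_dominated) (auto simp: cesaro_null_def bounded_measurable_def)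

lemma cesaro_null_add:
  assumes "cesaro_null \<phi>" "cesaro_null \<psi>"
  shows "cesaro_null (\<lambda>t. \<phi> t + \<psi> t)"
proof -
  have bm: "bounded_measurable (\<lambda>t. \<bar>\<phi> t\<bar>)" "bounded_measurable (\<lambda>t. \<bar>\<psi> t\<bar>)"
    using assms unfolding cesaro_null_def by (auto intro: bounded_measurable_abs)
  have "cesaro_null (\<lambda>t. \<bar>\<phi> t\<bar> + \<bar>\<psi> t\<bar>)"
    unfolding cesaro_null_def
  proof
    show "bounded_measurable (\<lambda>t. \<bar>\<phi> t\<bar> + \<bar>\<psi> t\<bar>)"
      using bm by (rule bounded_measurable_add)
    have "((\<lambda>T. avg (\<lambda>t. \<bar>\<phi> t\<bar>) T + avg (\<lambda>t. \<bar>\<psi> t\<bar>) T) \<longlongrightarrow> 0 + 0) at_top"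
      using assms unfolding cesaro_null_def by (intro tendsto_add) auto
    then show "((\<lambda>T. avg (\<lambda>t. \<bar>\<bar>\<phi> t\<bar> + \<bar>\<psi> t\<bar>\<bar>) T) \<longlongrightarrow> 0) at_top"
      using avg_add[OF bm] by simp
  qed
  moreover have "(\<lambda>t. \<phi> t + \<psi> t) \<in> borel_measurable L"
    using assms unfolding cesaro_null_def bounded_measurable_def by auto
  ultimately show ?thesis
    by (rule cesaro_null_dominated) (simp add: abs_triangle_ineq)
qed

lemma cesaro_null_uniform_limit:
  assumes bm: "bounded_measurable \<phi>"
    and approx: "\<And>e. e > 0 \<Longrightarrow> \<exists>\<psi>. cesaro_null \<psi> \<and> (\<forall>t. \<bar>\<phi> t - \<psi> t\<bar> \<le> e)"
  shows "cesaro_null \<phi>"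
proof -
  have "((\<lambda>T. avg (\<lambda>t. \<bar>\<phi> t\<bar>) T) \<longlongrightarrow> 0) at_top"
  proof (rule tendstoI)
    fix e :: real assume e: "e > 0"
    obtain \<psi> where null: "cesaro_null \<psi>" and close: "\<forall>t. \<bar>\<phi> t - \<psi> t\<bar> \<le> e / 4"
      using approx[of "e / 4"] e by auto
    have bm\<psi>: "bounded_measurable (\<lambda>t. \<bar>\<psi> t\<bar>)"
      using null unfolding cesaro_null_def by (simp add: bounded_measurable_abs)
    have small: "\<forall>\<^sub>F T in at_top. avg (\<lambda>t. \<bar>\<psi> t\<bar>) T < e / 2"
      using order_tendstoD(2)[of _ 0 at_top "e / 2"] null e unfolding cesaro_null_def by auto
    have volume: "\<forall>\<^sub>F T in at_top. volume_ratio T < 2"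
      using order_tendstoD(2)[OF volume_ratio_tendsto, of 2] by simp
    show "\<forall>\<^sub>F T in at_top. dist (avg (\<lambda>t. \<bar>\<phi> t\<bar>) T) 0 < e"
      using small volume eventually_gt_at_top[of "0::real"]
    proof eventually_elim
      case (elim T)
      have "0 \<le> avg (\<lambda>t. \<bar>\<phi> t\<bar>) T"
        using elim(3) bm by (simp add: avg_nonneg bounded_measurable_abs)
      moreover have "avg (\<lambda>t. \<bar>\<phi> t\<bar>) T \<le> avg (\<lambda>t. \<bar>\<psi> t\<bar> + e / 4) T"
      proof (rule avg_mono)
        show "\<bar>\<phi> t\<bar> \<le> \<bar>\<psi> t\<bar> + e / 4" for t
          using close[rule_format, of t] by linarith
      qed (use elim(3) bm bm\<psi> in \<open>auto simp: bounded_measurable_abs bounded_measurable_add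
              bounded_measurable_const\<close>)
      moreover have "avg (\<lambda>t. \<bar>\<psi> t\<bar> + e / 4) T = avg (\<lambda>t. \<bar>\<psi> t\<bar>) T + e / 4 * volume_ratio T"
        using avg_add[OF bm\<psi> bounded_measurable_const] by (simp add: avg_const)
      moreover have "e / 4 * volume_ratio T \<le> e / 4 * 2"
        using elim(2) e by (intro mult_left_mono) auto
      ultimately show ?case using elim(1) by simp
    qed
  qed
  with bm show ?thesis unfolding cesaro_null_def by blast
qed

text \<open>Let F assign to every event a function of the index, additively on disjoint
  events and Lipschitz-continuously in the probability of the difference.  Then
  Cesaro-nullity passes from the members of a disjoint sequence of events to their
  union: the partial unions are Cesaro-null by additivity, and they approximate the
  union uniformly.\<close>
lemma cesaro_null_disjoint_UN:
  fixes M :: "'a measure" and F :: "'a set \<Rightarrow> 't \<Rightarrow> real" and A :: "nat \<Rightarrow> 'a set"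
  assumes M: "prob_space M"
    and additive: "\<And>A A'. A \<in> sets M \<Longrightarrow> A' \<in> sets M \<Longrightarrow> A \<inter> A' = {} \<Longrightarrow>
                      F (A \<union> A') = (\<lambda>t. F A t + F A' t)"
    and empty: "F {} = (\<lambda>_. 0)"
    and lipschitz: "\<And>A A' t. A \<in> sets M \<Longrightarrow> A' \<in> sets M \<Longrightarrow> A' \<subseteq> A \<Longrightarrow>
                      \<bar>F A t - F A' t\<bar> \<le> measure M (A - A')"
    and A_sets: "\<And>i. A i \<in> sets M" and disjoint: "disjoint_family A"
    and null: "\<And>i. cesaro_null (F (A i))" and bm: "bounded_measurable (F (\<Union>i. A i))"
  shows "cesaro_null (F (\<Union>i. A i))"
proof -
  interpret prob_space M by (rule M)
  define U where "U n = (\<Union>i<n. A i)" for n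
  have U_sets: "U n \<in> sets M" for n unfolding U_def using A_sets by blast
  have U_Suc: "U (Suc n) = U n \<union> A n" for n
    unfolding U_def by (simp add: lessThan_Suc Un_commute)
  have U_disjoint: "U n \<inter> A n = {}" for n
    using disjoint unfolding U_def disjoint_family_on_def by (auto dest: less_imp_neq)
  have U_null: "cesaro_null (F (U n))" for n
  proof (induction n)
    case 0
    show ?case using cesaro_null_0 empty unfolding U_def by simp
  next
    case (Suc n)
    have "F (U (Suc n)) = (\<lambda>t. F (U n) t + F (A n) t)"
      unfolding U_Suc by (rule additive[OF U_sets A_sets U_disjoint])
    then show ?case using cesaro_null_add[OF Suc null] by simp
  qed
  have UA_sets: "(\<Union>i. A i) \<in> sets M" using A_sets by blast
  have U_sub: "U n \<subseteq> (\<Union>i. A i)" for n unfolding U_def by blast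
  have "(\<lambda>n. measure M (U n)) \<longlonglongrightarrow> measure M (\<Union>n. U n)"
  proof (rule finite_Lim_measure_incseq)
    show "incseq U" unfolding incseq_def U_def by (force intro: order_less_le_trans)
  qed (use U_sets in blast)
  moreover have "(\<Union>n. U n) = (\<Union>i. A i)" unfolding U_def by blast
  ultimately have U_lim: "(\<lambda>n. measure M (U n)) \<longlonglongrightarrow> measure M (\<Union>i. A i)" by simp
  show ?thesis
  proof (rule cesaro_null_uniform_limit[OF bm])
    fix e :: real assume e: "e > 0"
    obtain n where n: "dist (measure M (U n)) (measure M (\<Union>i. A i)) < e"
      using tendstoD[OF U_lim e] eventually_sequentially by auto
    have "measure M ((\<Union>i. A i) - U n) = measure M (\<Union>i. A i) - measure M (U n)"
      using finite_measure_Diff[OF UA_sets U_sets U_sub] .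
    then have "measure M ((\<Union>i. A i) - U n) \<le> e"
      using n unfolding dist_real_def by linarith
    then have "\<forall>t. \<bar>F (\<Union>i. A i) t - F (U n) t\<bar> \<le> e"
      using lipschitz[OF UA_sets U_sets U_sub] by (meson order_trans)
    then show "\<exists>\<psi>. cesaro_null \<psi> \<and> (\<forall>t. \<bar>F (\<Union>i. A i) t - \<psi> t\<bar> \<le> e)"
      using U_null by blast
  qed
qed

text \<open>Dynkin extension.\<close>
lemma cesaro_null_sigma_sets:
  fixes M :: "'a measure" and G :: "'a set set" and F :: "'a set \<Rightarrow> 't \<Rightarrow> real"
  assumes M: "prob_space M" and G: "Int_stable G" "G \<subseteq> sets M"
    and bm: "\<And>A. A \<in> sigma_sets (space M) G \<Longrightarrow> bounded_measurable (F A)"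
    and additive: "\<And>A A'. A \<in> sets M \<Longrightarrow> A' \<in> sets M \<Longrightarrow> A \<inter> A' = {} \<Longrightarrow>
                      F (A \<union> A') = (\<lambda>t. F A t + F A' t)"
    and total: "F (space M) = (\<lambda>_. 0)"
    and lipschitz: "\<And>A A' t. A \<in> sets M \<Longrightarrow> A' \<in> sets M \<Longrightarrow> A' \<subseteq> A \<Longrightarrow>
                      \<bar>F A t - F A' t\<bar> \<le> measure M (A - A')"
    and base: "\<And>A. A \<in> G \<Longrightarrow> cesaro_null (F A)"
    and A: "A \<in> sigma_sets (space M) G"
  shows "cesaro_null (F A)"
proof -
  interpret prob_space M by (rule M)
  have generated: "sigma_sets (space M) G \<subseteq> sets M"
    using G(2) by (rule sets.sigma_sets_subset)
  have empty: "F {} = (\<lambda>_. 0)"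
  proof
    fix t
    have "F {} t = F {} t + F {} t" using additive[of "{}" "{}"] by (simp add: fun_eq_iff)
    then show "F {} t = 0" by simp
  qed
  have "G \<subseteq> Pow (space M)" using G(2) sets.sets_into_space by blast
  from G(1) this A show ?thesis
  proof (induction rule: sigma_sets_induct_disjoint)
    case (basic A)
    then show ?case by (rule base)
  next
    case empty
    show ?case unfolding \<open>F {} = (\<lambda>_. 0)\<close> by (rule cesaro_null_0)
  next
    case (compl A)
    then have A_sets: "A \<in> sets M" using generated by blast
    have "A \<union> (space M - A) = space M"
      using A_sets sets.sets_into_space by blast
    moreover have "F (A \<union> (space M - A)) = (\<lambda>t. F A t + F (space M - A) t)"
      using A_sets by (intro additive) auto
    ultimately have "F (space M) = (\<lambda>t. F A t + F (space M - A) t)"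
      by simp
    then have "F (space M - A) = (\<lambda>t. - F A t)"
      unfolding total by (simp add: fun_eq_iff add_eq_0_iff)
    then show ?case using cesaro_null_uminus[OF compl(2)] by simp
  next
    case (union A)
    have "(\<Union>i. A i) \<in> sigma_sets (space M) G"
      by (rule sigma_sets.Union) (use union(2) in blast)
    moreover have "A i \<in> sets M" for i
      using union(2) generated by blast
    ultimately show ?case
      using union(1,3) by (intro cesaro_null_disjoint_UN[OF M additive empty lipschitz] bm)
  qed
qed

end

context prob_space
begin

definition set_cov :: "'a set \<Rightarrow> 'a set \<Rightarrow> real" where
  "set_cov A C = prob (A \<inter> C) - prob A * prob C"

lemma set_cov_commute: "set_cov A C = set_cov C A"
  unfolding set_cov_def by (simp add: Int_commute mult.commute)

lemma set_cov_bounded: "\<bar>set_cov A C\<bar> \<le> 1"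
proof -
  have "0 \<le> prob (A \<inter> C)" "prob (A \<inter> C) \<le> 1" "0 \<le> prob A * prob C" "prob A * prob C \<le> 1"
    by (auto intro: mult_le_one)
  then show ?thesis unfolding set_cov_def by linarith
qed

lemma set_cov_Un:
  assumes "A \<in> events" "A' \<in> events" "C \<in> events" "A \<inter> A' = {}"
  shows "set_cov (A \<union> A') C = set_cov A C + set_cov A' C"
proof -
  have "prob ((A \<union> A') \<inter> C) = prob (A \<inter> C) + prob (A' \<inter> C)"
    using finite_measure_Union[of "A \<inter> C" "A' \<inter> C"] assms by (auto simp: Int_Un_distrib2)
  moreover have "prob (A \<union> A') = prob A + prob A'"
    using finite_measure_Union assms by auto
  ultimately show ?thesis unfolding set_cov_def by (simp add: algebra_simps)
qed

lemma set_cov_space: "C \<in> events \<Longrightarrow> set_cov (space M) C = 0"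
  unfolding set_cov_def by (simp add: Int_absorb1 sets.sets_into_space prob_space)

lemma set_cov_Diff_le:
  assumes "A \<in> events" "A' \<in> events" "C \<in> events" "A' \<subseteq> A"
  shows "\<bar>set_cov A C - set_cov A' C\<bar> \<le> prob (A - A')"
proof -
  have "prob ((A - A') \<inter> C) = prob (A \<inter> C) - prob (A' \<inter> C)"
    using finite_measure_Diff[of "A \<inter> C" "A' \<inter> C"] assms by (auto simp: Diff_Int_distrib2)
  moreover have "prob (A - A') * prob C = prob A * prob C - prob A' * prob C"
    using finite_measure_Diff assms by (simp add: left_diff_distrib)
  ultimately have "set_cov A C - set_cov A' C = prob ((A - A') \<inter> C) - prob (A - A') * prob C"
    unfolding set_cov_def by linarith
  moreover have "prob ((A - A') \<inter> C) \<le> prob (A - A')"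
    using assms by (intro finite_measure_mono) auto
  moreover have "prob (A - A') * prob C \<le> prob (A - A')"
    by (simp add: mult_left_le)
  moreover have "0 \<le> prob (A - A') * prob C" "0 \<le> prob ((A - A') \<inter> C)" by simp_all
  ultimately show ?thesis unfolding abs_le_iff by linarith
qed

end

locale stationary_field = prob_space M
  for M :: "'a measure" +
  fixes \<theta> :: "'t::ab_group_add \<Rightarrow> 'a \<Rightarrow> 'a" and X0 :: "'a \<Rightarrow> real"
  assumes X0_measurable: "X0 \<in> borel_measurable M"
    and action: "mp_action M \<theta>"
begin

abbreviation X :: "'t \<Rightarrow> 'a \<Rightarrow> real" where
  "X \<equiv> field_of X0 \<theta>"

lemma shift_measurable: "\<theta> t \<in> M \<rightarrow>\<^sub>M M"
  and shift_distr: "distr M M (\<theta> t) = M"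
  and shift_zero: "\<omega> \<in> space M \<Longrightarrow> \<theta> 0 \<omega> = \<omega>"
  and shift_add: "\<omega> \<in> space M \<Longrightarrow> \<theta> (s + t) \<omega> = \<theta> s (\<theta> t \<omega>)"
  using action unfolding mp_action_def by auto

lemma shift_space: "\<omega> \<in> space M \<Longrightarrow> \<theta> t \<omega> \<in> space M"
  using measurable_space[OF shift_measurable] by blast

lemma shift_inverse: "\<omega> \<in> space M \<Longrightarrow> \<theta> (- t) (\<theta> t \<omega>) = \<omega>" "\<omega> \<in> space M \<Longrightarrow> \<theta> t (\<theta> (- t) \<omega>) = \<omega>"
  by (metis shift_add shift_zero add.left_inverse add.right_inverse)+

text \<open>The translate \<theta>_t(E) of an event, written as a preimage so that it is
  visibly measurable.\<close>
definition translate :: "'t \<Rightarrow> 'a set \<Rightarrow> 'a set" where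
  "translate t E = \<theta> (- t) -` E \<inter> space M"

lemma image_eq_translate: "E \<subseteq> space M \<Longrightarrow> \<theta> t ` E = translate t E"
  unfolding translate_def
  by (auto simp: shift_space shift_inverse intro!: image_eqI[of _ _ "\<theta> (- t) _"])

lemma translate_sets: "E \<in> events \<Longrightarrow> translate t E \<in> events"
  unfolding translate_def using shift_measurable by (rule measurable_sets)

lemma prob_translate: "E \<in> events \<Longrightarrow> prob (translate t E) = prob E"
  unfolding translate_def using measure_distr[OF shift_measurable, of E "- t"] shift_distr[of "- t"]
  by simp

lemma translate_Un: "translate t (E \<union> E') = translate t E \<union> translate t E'"
  and translate_Int: "translate t (E \<inter> E') = translate t E \<inter> translate t E'"
  and translate_Diff: "translate t (E - E') = translate t E - translate t E'"
  and translate_space: "translate t (space M) = space M"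
  unfolding translate_def by (auto simp: shift_space)

lemma field_shift: "\<omega> \<in> space M \<Longrightarrow> X s (\<theta> t \<omega>) = X (s + t) \<omega>"
  unfolding field_of_def by (simp add: shift_add)

lemma field_measurable: "X t \<in> borel_measurable M"
  unfolding field_of_def[abs_def] using X0_measurable shift_measurable by measurable

lemma sigmaX_sigma_algebra: "sigma_algebra (space M) (sigmaX M X)"
  unfolding sigmaX_def by (rule sigma_algebra_sigma_sets) auto

lemma sigmaX_events: "sigmaX M X \<subseteq> events"
  unfolding sigmaX_def
  by (rule sets.sigma_sets_subset) (auto intro!: measurable_sets[OF field_measurable])

definition orthant :: "('t \<times> real) list \<Rightarrow> 'a set" where
  "orthant l = {\<omega> \<in> space M. \<forall>(s, a) \<in> set l. a < X s \<omega>}"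

lemma orthant_Int: "orthant l \<inter> orthant l' = orthant (l @ l')"
  unfolding orthant_def by auto

lemma Int_stable_orthants: "Int_stable (range orthant)"
  unfolding Int_stable_def by (auto simp: orthant_Int)

lemma orthant_sigmaX: "orthant l \<in> sigmaX M X"
proof (induction l)
  case Nil
  have "orthant [] = space M" unfolding orthant_def by simp
  then show ?case unfolding sigmaX_def by (simp add: sigma_sets_top)
next
  case (Cons p l)
  interpret sigmaX: sigma_algebra "space M" "sigmaX M X" by (rule sigmaX_sigma_algebra)
  obtain s a where p: "p = (s, a)" by fastforce
  have "orthant (p # l) = (X s -` {a<..} \<inter> space M) \<inter> orthant l"
    unfolding orthant_def p by auto
  moreover have "X s -` {a<..} \<inter> space M \<in> sigmaX M X"
    unfolding sigmaX_def by (rule sigma_sets.Basic) (auto intro!: exI[of _ s] exI[of _ "{a<..}"])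
  ultimately show ?case using Cons.IH by auto
qed

lemma orthants_events: "range orthant \<subseteq> events"
  using orthant_sigmaX sigmaX_events by blast

lemma orthants_Pow: "range orthant \<subseteq> Pow (space M)"
  unfolding orthant_def by auto

lemma sigma_orthants: "sigma_sets (space M) (range orthant) = sigmaX M X"
proof
  show "sigma_sets (space M) (range orthant) \<subseteq> sigmaX M X"
    by (rule sigma_algebra.sigma_sets_subset[OF sigmaX_sigma_algebra]) (auto intro: orthant_sigmaX)
next
  let ?S = "sigma (space M) (range orthant)"
  have space_S: "space ?S = space M" and sets_S: "sets ?S = sigma_sets (space M) (range orthant)"
    using orthants_Pow by auto
  have "X s \<in> measurable ?S (sigma UNIV (range greaterThan))" for s
  proof (rule measurable_measure_of)
    fix y assume "y \<in> range (greaterThan :: real \<Rightarrow> real set)"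
    then obtain a where "y = {a<..}" by auto
    then have "X s -` y \<inter> space ?S = orthant [(s, a)]" unfolding space_S orthant_def by auto
    then show "X s -` y \<inter> space ?S \<in> sets ?S" unfolding sets_S by auto
  qed auto
  then have "X s \<in> borel_measurable ?S" for s
    unfolding borel_Ioi by simp
  from measurable_sets[OF this] have "X s -` S \<inter> space M \<in> sigma_sets (space M) (range orthant)"
    if "S \<in> sets borel" for s S
    using that unfolding space_S sets_S .
  then show "sigmaX M X \<subseteq> sigma_sets (space M) (range orthant)"
    unfolding sigmaX_def
    by (intro sigma_algebra.sigma_sets_subset[OF sigma_algebra_sigma_sets[OF orthants_Pow]]) auto
qed

lemma translate_orthant: "translate t (orthant l) = orthant (map (\<lambda>(s, a). (s - t, a)) l)"
  unfolding translate_def orthant_def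
  by (auto simp: shift_space field_shift[of _ _ "- t", simplified])

definition exceeds :: "real list \<Rightarrow> real list \<Rightarrow> real" where
  "exceeds as xs = (if list_all2 (<) as xs then 1 else 0)"

lemma exceeds_mono: "list_all2 (\<le>) xs ys \<Longrightarrow> exceeds as xs \<le> exceeds as ys"
  unfolding exceeds_def using list_all2_trans[of "(<)" "(\<le>)" "(<)" as xs ys] by auto

lemma exceeds_orthant:
  "\<omega> \<in> space M \<Longrightarrow> exceeds (map snd l) (map (\<lambda>s. X s \<omega>) (map fst l)) = indicator (orthant l) \<omega>"
  unfolding exceeds_def orthant_def indicator_def
  by (auto simp: list_all2_map1 list_all2_map2 list_all2_same)

lemma integral_orthant_indicator:
  assumes "\<And>\<omega>. \<omega> \<in> space M \<Longrightarrow> f \<omega> = indicator (orthant l) \<omega>"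
  shows "integrable M f" "(\<integral>\<omega>. f \<omega> \<partial>M) = prob (orthant l)"
proof -
  have "orthant l \<in> events" using orthants_events by blast
  then show "integrable M f" "(\<integral>\<omega>. f \<omega> \<partial>M) = prob (orthant l)"
    by (simp_all add: Bochner_Integration.integrable_cong[OF refl assms]
          Bochner_Integration.integral_cong[OF refl assms] less_top[symmetric])
qed

text \<open>Association makes any two orthant events positively correlated: apply the
  definition to the two non-decreasing indicators on the concatenated index list.\<close>
lemma orthant_cov_nonneg:
  assumes "associated M X"
  shows "0 \<le> set_cov (orthant l) (orthant l')"
proof -
  let ?ts = "map fst l @ map fst l'"
  let ?x = "\<lambda>\<omega>. map (\<lambda>s. X s \<omega>) ?ts"
  define g where "g xs = exceeds (map snd l) (take (length l) xs)" for xs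
  define g' where "g' xs = exceeds (map snd l') (drop (length l) xs)" for xs
  have mono: "g xs \<le> g ys \<and> g' xs \<le> g' ys" if "list_all2 (\<le>) xs ys" for xs ys
    unfolding g_def g'_def using that
    by (auto intro: exceeds_mono list_all2_takeI list_all2_dropI)
  have g: "g (?x \<omega>) = indicator (orthant l) \<omega>"
    and g': "g' (?x \<omega>) = indicator (orthant l') \<omega>"
    and gg': "g (?x \<omega>) * g' (?x \<omega>) = indicator (orthant (l @ l')) \<omega>" if "\<omega> \<in> space M" for \<omega>
    using exceeds_orthant[OF that, of l] exceeds_orthant[OF that, of l']
    by (simp_all add: g_def g'_def orthant_Int[symmetric] indicator_inter_arith)
  note I = integral_orthant_indicator[OF g] integral_orthant_indicator[OF g'] integral_orthant_indicator[OF gg']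
  have "0 \<le> (\<integral>\<omega>. g (?x \<omega>) * g' (?x \<omega>) \<partial>M) - (\<integral>\<omega>. g (?x \<omega>) \<partial>M) * (\<integral>\<omega>. g' (?x \<omega>) \<partial>M)"
    using assms mono I(1,3,5) unfolding associated_def by blast
  then show ?thesis using I(2,4,6) unfolding set_cov_def orthant_Int by simp
qed

end

locale associated_field = box_average L B d + stationary_field M \<theta> X0
  for L :: "'t::ab_group_add measure" and B d and M :: "'a measure"
    and \<theta> :: "'t \<Rightarrow> 'a \<Rightarrow> 'a" and X0 +
  assumes jointly_measurable: "measurable_field L M (field_of X0 \<theta>)"
    and associated: "associated M (field_of X0 \<theta>)"
    and space_L: "space L = UNIV"
    and reflection_measurable: "\<And>s. (\<lambda>t. s - t) \<in> L \<rightarrow>\<^sub>M L"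
begin

definition corr :: "'a set \<Rightarrow> 'a set \<Rightarrow> 't \<Rightarrow> real" where
  "corr A E t = set_cov A (translate t E)"

lemma corr_eq: "E \<in> events \<Longrightarrow> corr A E t = prob (A \<inter> translate t E) - prob A * prob E"
  by (simp add: corr_def set_cov_def prob_translate)

lemma translate_graph_sets:
  assumes "E \<in> sigmaX M X"
  shows "{p \<in> space (L \<Otimes>\<^sub>M M). \<theta> (- fst p) (snd p) \<in> E} \<in> sets (L \<Otimes>\<^sub>M M)"
  using assms unfolding sigmaX_def
proof (induction rule: sigma_sets.induct)
  case (Basic E)
  then obtain s S where E: "E = X s -` S \<inter> space M" "S \<in> sets borel" by auto
  have "(\<lambda>p. (s - fst p, snd p)) \<in> L \<Otimes>\<^sub>M M \<rightarrow>\<^sub>M L \<Otimes>\<^sub>M M"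
    using reflection_measurable[of s] by measurable
  from measurable_comp[OF this jointly_measurable[unfolded measurable_field_def]]
  have "(\<lambda>p. X (s - fst p) (snd p)) \<in> borel_measurable (L \<Otimes>\<^sub>M M)"
    by (simp add: o_def)
  from measurable_sets[OF this E(2)]
  show ?case
    by (rule back_subst) (auto simp: E field_shift shift_space space_pair_measure)
next
  case Empty
  then show ?case by simp
next
  case (Compl E)
  have "{p \<in> space (L \<Otimes>\<^sub>M M). \<theta> (- fst p) (snd p) \<in> space M - E}
      = space (L \<Otimes>\<^sub>M M) - {p \<in> space (L \<Otimes>\<^sub>M M). \<theta> (- fst p) (snd p) \<in> E}"
    using shift_space by (auto simp: space_pair_measure)
  then show ?case using Compl by auto
next
  case (Union E)
  have "{p \<in> space (L \<Otimes>\<^sub>M M). \<theta> (- fst p) (snd p) \<in> (\<Union>i. E i)}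
      = (\<Union>i. {p \<in> space (L \<Otimes>\<^sub>M M). \<theta> (- fst p) (snd p) \<in> E i})"
    by auto
  then show ?case using Union by auto
qed

lemma corr_bounded_measurable:
  assumes A: "A \<in> events" and E: "E \<in> sigmaX M X"
  shows "bounded_measurable (corr A E)"
proof (rule bounded_measurableI)
  let ?G = "{p \<in> space (L \<Otimes>\<^sub>M M). \<theta> (- fst p) (snd p) \<in> E} \<inter> (space L \<times> A)"
  have "?G \<in> sets (L \<Otimes>\<^sub>M M)"
    using translate_graph_sets[OF E] A by auto
  note section_measurable = measurable_emeasure_Pair[OF this]
  have "Pair t -` ?G = A \<inter> translate t E" for t
    using sets.sets_into_space[OF A] space_L by (auto simp: translate_def space_pair_measure)
  with section_measurable have "(\<lambda>t. emeasure M (A \<inter> translate t E)) \<in> borel_measurable L"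
    by (simp only:)
  then have "(\<lambda>t. prob (A \<inter> translate t E)) \<in> borel_measurable L"
    unfolding measure_def by (rule borel_measurable_enn2real)
  moreover have "corr A E = (\<lambda>t. prob (A \<inter> translate t E) - prob A * prob E)"
    using E sigmaX_events by (intro ext corr_eq) blast
  ultimately show "corr A E \<in> borel_measurable L"
    by simp
  show "\<bar>corr A E t\<bar> \<le> 1" for t
    unfolding corr_def by (rule set_cov_bounded)
qed

text \<open>In each argument, the correlation function is additive on disjoint events,
  vanishes at the whole space and is 1-Lipschitz with respect to the probability of
  the difference; these are the hypotheses of the Dynkin extension lemma.\<close>
lemma corr_Un_left:
  "A \<in> events \<Longrightarrow> A' \<in> events \<Longrightarrow> E \<in> events \<Longrightarrow> A \<inter> A' = {} \<Longrightarrow>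
    corr (A \<union> A') E = (\<lambda>t. corr A E t + corr A' E t)"
  unfolding corr_def by (simp add: set_cov_Un translate_sets)

lemma corr_Un_right:
  assumes "A \<in> events" "E \<in> events" "E' \<in> events" "E \<inter> E' = {}"
  shows "corr A (E \<union> E') = (\<lambda>t. corr A E t + corr A E' t)"
proof
  fix t
  have "translate t E \<inter> translate t E' = {}"
    using assms(4) translate_Int[of t E E'] by (simp add: translate_def)
  then show "corr A (E \<union> E') t = corr A E t + corr A E' t"
    using assms unfolding corr_def translate_Un
    by (simp add: set_cov_commute[of A] set_cov_Un translate_sets)
qed

lemma corr_space_left: "E \<in> events \<Longrightarrow> corr (space M) E = (\<lambda>_. 0)"
  unfolding corr_def by (simp add: set_cov_space translate_sets)

lemma corr_space_right: "A \<in> events \<Longrightarrow> corr A (space M) = (\<lambda>_. 0)"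
  unfolding corr_def translate_space by (simp add: set_cov_commute[of A] set_cov_space)

lemma corr_lipschitz_left:
  "A \<in> events \<Longrightarrow> A' \<in> events \<Longrightarrow> E \<in> events \<Longrightarrow> A' \<subseteq> A \<Longrightarrow>
    \<bar>corr A E t - corr A' E t\<bar> \<le> prob (A - A')"
  unfolding corr_def by (simp add: set_cov_Diff_le translate_sets)

lemma corr_lipschitz_right:
  assumes "A \<in> events" "E \<in> events" "E' \<in> events" "E' \<subseteq> E"
  shows "\<bar>corr A E t - corr A E' t\<bar> \<le> prob (E - E')"
proof -
  have "translate t E' \<subseteq> translate t E"
    using assms(4) unfolding translate_def by auto
  then have "\<bar>corr A E t - corr A E' t\<bar> \<le> prob (translate t E - translate t E')"
    using assms unfolding corr_def by (simp add: set_cov_commute[of A] set_cov_Diff_le translate_sets)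
  also have "\<dots> = prob (E - E')"
    using assms by (simp add: translate_Diff[symmetric] prob_translate)
  finally show ?thesis .
qed

lemma corr_orthant_nonneg: "0 \<le> corr (orthant l) (orthant l') t"
  unfolding corr_def translate_orthant
  using orthant_cov_nonneg[OF associated] .

text \<open>On orthant events the correlations are non-negative, so the two notions agree
  there; the Dynkin extension lemma then propagates Cesaro-nullity first in the
  left event and then in the right one.\<close>
lemma corr_cesaro_null:
  assumes means: "\<forall>A\<in>sigmaX M X. \<forall>E\<in>sigmaX M X. (avg (corr A E) \<longlongrightarrow> 0) at_top"
    and A: "A \<in> sigmaX M X" and E: "E \<in> sigmaX M X"
  shows "cesaro_null (corr A E)"
proof -
  note generator = prob_space_axioms Int_stable_orthants orthants_events
  have sigmaX_eq: "sigma_sets (space M) (range orthant) = sigmaX M X"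
    by (rule sigma_orthants)
  have left: "cesaro_null (corr A (orthant l))" if A: "A \<in> sigmaX M X" for A l
  proof (rule cesaro_null_sigma_sets[OF generator, where F = "\<lambda>A. corr A (orthant l)"])
    have E: "orthant l \<in> sigmaX M X" "orthant l \<in> events"
      using orthant_sigmaX orthants_events by auto
    show "bounded_measurable (corr A' (orthant l))" if "A' \<in> sigma_sets (space M) (range orthant)" for A'
      using that sigmaX_events E by (intro corr_bounded_measurable) (auto simp: sigmaX_eq)
    show "cesaro_null (corr A' (orthant l))" if "A' \<in> range orthant" for A'
    proof -
      obtain l' where A': "A' = orthant l'" using \<open>A' \<in> range orthant\<close> by blast
      then have "(\<lambda>t. \<bar>corr A' (orthant l) t\<bar>) = corr A' (orthant l)"
        using corr_orthant_nonneg by (simp add: fun_eq_iff)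
      moreover have "bounded_measurable (corr A' (orthant l))"
        using A' orthants_events E by (intro corr_bounded_measurable) auto
      ultimately show ?thesis
        using means A' orthant_sigmaX E unfolding cesaro_null_def by auto
    qed
  qed (use A sigmaX_eq orthants_events in \<open>auto simp: corr_Un_left corr_space_left corr_lipschitz_left\<close>)
  show ?thesis
  proof (rule cesaro_null_sigma_sets[OF generator, where F = "corr A"])
    show "bounded_measurable (corr A E')" if "E' \<in> sigma_sets (space M) (range orthant)" for E'
      using that A sigmaX_events by (intro corr_bounded_measurable) (auto simp: sigmaX_eq)
  qed (use A E left sigmaX_eq sigmaX_events in \<open>auto simp: corr_Un_right corr_space_right corr_lipschitz_right\<close>)
qed

lemma measure_Int_image:
  assumes "A \<in> sigmaX M X" "E \<in> sigmaX M X"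
  shows "measure M (A \<inter> \<theta> t ` E) = corr A E t + prob A * prob E"
  using assms sigmaX_events sets.sets_into_space
  by (subst image_eq_translate) (auto simp: corr_eq)

lemma ergodic_average:
  assumes "A \<in> sigmaX M X" "E \<in> sigmaX M X"
  shows "(LINT t:B T|L. measure M (A \<inter> \<theta> t ` E)) / (2 * T) ^ d
           = avg (corr A E) T + prob A * prob E * volume_ratio T"
proof -
  have "(LINT t:B T|L. measure M (A \<inter> \<theta> t ` E)) / (2 * T) ^ d
          = avg (\<lambda>t. corr A E t + prob A * prob E) T"
    unfolding avg_def using measure_Int_image[OF assms] by simp
  also have "\<dots> = avg (corr A E) T + prob A * prob E * volume_ratio T"
    using assms sigmaX_events
    by (simp add: avg_add avg_const corr_bounded_measurable bounded_measurable_const subset_eq)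
  finally show ?thesis .
qed

lemma mixing_average:
  assumes "A \<in> sigmaX M X" "E \<in> sigmaX M X"
  shows "(LINT t:B T|L. \<bar>measure M (A \<inter> \<theta> t ` E) - measure M A * measure M E\<bar>) / (2 * T) ^ d
           = avg (\<lambda>t. \<bar>corr A E t\<bar>) T"
  unfolding avg_def using measure_Int_image[OF assms] by simp

lemma ergodic_iff_corr_means:
  "ergodic_field L B d M \<theta> X \<longleftrightarrow> (\<forall>A\<in>sigmaX M X. \<forall>E\<in>sigmaX M X. (avg (corr A E) \<longlongrightarrow> 0) at_top)"
proof -
  have scaled: "((\<lambda>T. c * volume_ratio T) \<longlongrightarrow> c) at_top" for c
    using tendsto_mult[OF tendsto_const volume_ratio_tendsto, of c] by simp
  have "((\<lambda>T. (LINT t:B T|L. measure M (A \<inter> \<theta> t ` E)) / (2 * T) ^ d) \<longlongrightarrow> prob A * prob E) at_top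
          \<longleftrightarrow> (avg (corr A E) \<longlongrightarrow> 0) at_top"
    if "A \<in> sigmaX M X" "E \<in> sigmaX M X" for A E
    unfolding ergodic_average[OF that]
  proof
    show "(avg (corr A E) \<longlongrightarrow> 0) at_top"
      if "((\<lambda>T. avg (corr A E) T + prob A * prob E * volume_ratio T) \<longlongrightarrow> prob A * prob E) at_top"
      using tendsto_diff[OF that scaled[of "prob A * prob E"]] by simp
    show "((\<lambda>T. avg (corr A E) T + prob A * prob E * volume_ratio T) \<longlongrightarrow> prob A * prob E) at_top"
      if "(avg (corr A E) \<longlongrightarrow> 0) at_top"
      using tendsto_add[OF that scaled[of "prob A * prob E"]] by simp
  qed
  then show ?thesis unfolding ergodic_field_def by blast
qed

lemma weakly_mixing_iff_corr_cesaro_null: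
  "weakly_mixing_field L B d M \<theta> X \<longleftrightarrow> (\<forall>A\<in>sigmaX M X. \<forall>E\<in>sigmaX M X. cesaro_null (corr A E))"
proof -
  have "((\<lambda>T. (LINT t:B T|L. \<bar>measure M (A \<inter> \<theta> t ` E) - measure M A * measure M E\<bar>) / (2 * T) ^ d)
            \<longlongrightarrow> 0) at_top \<longleftrightarrow> cesaro_null (corr A E)"
    if "A \<in> sigmaX M X" "E \<in> sigmaX M X" for A E
    unfolding mixing_average[OF that] cesaro_null_def
    using that sigmaX_events corr_bounded_measurable by blast
  then show ?thesis unfolding weakly_mixing_field_def by blast
qed

theorem ergodic_iff_weakly_mixing:
  "ergodic_field L B d M \<theta> X \<longleftrightarrow> weakly_mixing_field L B d M \<theta> X"
  unfolding ergodic_iff_corr_means weakly_mixing_iff_corr_cesaro_null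
  using corr_cesaro_null cesaro_null_avg by blast

end

definition int_window :: "real \<Rightarrow> int set" where
  "int_window T = {k. - T < real_of_int k \<and> real_of_int k \<le> T}"

lemma int_window_eq: "int_window T = {\<lfloor>- T\<rfloor> + 1 .. \<lfloor>T\<rfloor>}"
  unfolding int_window_def by (auto simp: le_floor_iff floor_less_iff add1_zle_eq)

lemma card_int_window_bounds:
  assumes "T \<ge> 0"
  shows "2 * T - 1 \<le> real (card (int_window T))" "real (card (int_window T)) \<le> 2 * T + 1"
proof -
  have "T - 1 < real_of_int \<lfloor>T\<rfloor>" "real_of_int \<lfloor>T\<rfloor> \<le> T"
       "- T - 1 < real_of_int \<lfloor>- T\<rfloor>" "real_of_int \<lfloor>- T\<rfloor> \<le> - T"
    by linarith+
  moreover from this have "\<lfloor>- T\<rfloor> \<le> \<lfloor>T\<rfloor>" using assms by linarith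
  then have "real (card (int_window T)) = real_of_int \<lfloor>T\<rfloor> - real_of_int \<lfloor>- T\<rfloor>"
    unfolding int_window_eq by simp
  ultimately show "2 * T - 1 \<le> real (card (int_window T))" "real (card (int_window T)) \<le> 2 * T + 1"
    by linarith+
qed

lemma card_int_window_ratio: "((\<lambda>T. real (card (int_window T)) / (2 * T)) \<longlongrightarrow> 1) at_top"
proof (rule tendsto_sandwich[of "\<lambda>T. 1 - 1 / (2 * T)" _ _ "\<lambda>T. 1 + 1 / (2 * T)"])
  show "\<forall>\<^sub>F T in at_top. 1 - 1 / (2 * T) \<le> real (card (int_window T)) / (2 * T)"
    using eventually_gt_at_top[of 0]
  proof eventually_elim
    case (elim T)
    then have "1 - 1 / (2 * T) = (2 * T - 1) / (2 * T)" by (simp add: diff_divide_distrib)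
    then show ?case using card_int_window_bounds(1)[of T] elim by (simp add: divide_right_mono)
  qed
  show "\<forall>\<^sub>F T in at_top. real (card (int_window T)) / (2 * T) \<le> 1 + 1 / (2 * T)"
    using eventually_gt_at_top[of 0]
  proof eventually_elim
    case (elim T)
    then have "1 + 1 / (2 * T) = (2 * T + 1) / (2 * T)" by (simp add: add_divide_distrib)
    then show ?case using card_int_window_bounds(2)[of T] elim by (simp add: divide_right_mono)
  qed
qed real_asymp+

lemma boxZ_eq_image: "(boxZ T :: (int ^ 'n) set) = vec_lambda ` (UNIV \<rightarrow>\<^sub>E int_window T)"
proof (intro equalityI subsetI)
  fix x :: "int ^ 'n" assume "x \<in> boxZ T"
  then have "vec_nth x \<in> UNIV \<rightarrow>\<^sub>E int_window T" unfolding boxZ_def int_window_def by auto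
  then show "x \<in> vec_lambda ` (UNIV \<rightarrow>\<^sub>E int_window T)" by (rule rev_image_eqI) simp
qed (auto simp: boxZ_def int_window_def)

lemma card_boxZ: "finite (boxZ T :: (int ^ 'n) set)" "card (boxZ T :: (int ^ 'n) set) = card (int_window T) ^ CARD('n)"
proof -
  have "inj_on (vec_lambda :: ('n \<Rightarrow> int) \<Rightarrow> int ^ 'n) (UNIV \<rightarrow>\<^sub>E int_window T)"
    by (rule inj_onI) (simp add: vec_lambda_inject)
  then show "card (boxZ T :: (int ^ 'n) set) = card (int_window T) ^ CARD('n)"
    unfolding boxZ_eq_image by (simp add: card_image card_PiE)
  show "finite (boxZ T :: (int ^ 'n) set)"
    unfolding boxZ_eq_image int_window_eq by (intro finite_imageI finite_PiE) auto
qed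

lemma box_average_boxZ: "box_average (count_space UNIV) (boxZ :: real \<Rightarrow> (int ^ 'n) set) CARD('n)"
proof
  show "emeasure (count_space UNIV) (boxZ T :: (int ^ 'n) set) < \<infinity>" for T
    using card_boxZ(1)[of T, where 'n='n] by (simp add: of_nat_less_top)
  have "measure (count_space UNIV) (boxZ T :: (int ^ 'n) set) / (2 * T) ^ CARD('n)
          = (real (card (int_window T)) / (2 * T)) ^ CARD('n)" for T
    using card_boxZ[of T, where 'n='n] by (simp add: measure_count_space power_divide)
  then show "((\<lambda>T. measure (count_space UNIV) (boxZ T :: (int ^ 'n) set) / (2 * T) ^ CARD('n)) \<longlongrightarrow> 1) at_top"
    using tendsto_power[OF card_int_window_ratio, of "CARD('n)"] by simp
qed simp

lemma boxR_between: "box (\<chi> i. - T) (\<chi> i. T) \<subseteq> (boxR T :: (real ^ 'n) set)"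
    "(boxR T :: (real ^ 'n) set) \<subseteq> cbox (\<chi> i. - T) (\<chi> i. T)"
  unfolding boxR_def by (auto simp: mem_box_cart less_imp_le)

lemma boxR_sets: "boxR T \<in> sets (lborel :: (real ^ 'n) measure)"
proof -
  have "boxR T = {x \<in> space (lborel :: (real ^ 'n) measure). \<forall>i\<in>UNIV. - T < x $ i \<and> x $ i \<le> T}"
    unfolding boxR_def by auto
  also have "\<dots> \<in> sets lborel" by measurable
  finally show ?thesis .
qed

text \<open>For T > 0 the box (-T, T]^n has volume (2T)^n, squeezed between the open and the
  closed box.\<close>
lemma emeasure_boxR:
  assumes "T > 0"
  shows "emeasure lborel (boxR T :: (real ^ 'n) set) = ennreal ((2 * T) ^ CARD('n))"
proof -
  have "(\<Prod>b\<in>Basis. ((\<chi> i. T) - (\<chi> i. - T) :: real ^ 'n) \<bullet> b) = (\<Prod>b\<in>(Basis :: (real ^ 'n) set). 2 * T)"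
    by (rule prod.cong) (auto simp: Basis_vec_def inner_axis)
  then have volume: "(\<Prod>b\<in>Basis. ((\<chi> i. T) - (\<chi> i. - T) :: real ^ 'n) \<bullet> b) = (2 * T) ^ CARD('n)"
    by simp
  have ordered: "\<forall>b\<in>(Basis :: (real ^ 'n) set). (\<chi> i. - T) \<bullet> b \<le> (\<chi> i. T) \<bullet> b"
    using assms by (auto simp: Basis_vec_def inner_axis)
  have "emeasure lborel (box (\<chi> i. - T) (\<chi> i. T) :: (real ^ 'n) set) \<le> emeasure lborel (boxR T :: (real ^ 'n) set)"
    by (rule emeasure_mono[OF boxR_between(1) boxR_sets])
  moreover have "emeasure lborel (boxR T :: (real ^ 'n) set) \<le> emeasure lborel (cbox (\<chi> i. - T) (\<chi> i. T) :: (real ^ 'n) set)"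
    by (rule emeasure_mono[OF boxR_between(2)]) simp
  ultimately show ?thesis
    using ordered unfolding emeasure_lborel_box_eq emeasure_lborel_cbox_eq volume by simp
qed

lemma box_average_boxR: "box_average lborel (boxR :: real \<Rightarrow> (real ^ 'n) set) CARD('n)"
proof
  show "boxR T \<in> sets (lborel :: (real ^ 'n) measure)" for T
    by (rule boxR_sets)
  show "emeasure lborel (boxR T :: (real ^ 'n) set) < \<infinity>" for T
  proof (rule order_le_less_trans)
    show "emeasure lborel (boxR T :: (real ^ 'n) set) \<le> emeasure lborel (cbox (\<chi> i. - T) (\<chi> i. T) :: (real ^ 'n) set)"
      by (rule emeasure_mono[OF boxR_between(2)]) simp
  qed (rule emeasure_lborel_cbox_finite)
  show "((\<lambda>T. measure lborel (boxR T :: (real ^ 'n) set) / (2 * T) ^ CARD('n)) \<longlongrightarrow> 1) at_top"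
  proof (rule tendsto_eventually)
    show "\<forall>\<^sub>F T in at_top. measure lborel (boxR T :: (real ^ 'n) set) / (2 * T) ^ CARD('n) = 1"
      using eventually_gt_at_top[of 0]
      by eventually_elim (simp add: measure_def emeasure_boxR)
  qed
qed

theorem mainTheorem17:
  fixes M :: "'a measure" and X0 :: "'a \<Rightarrow> real"
  assumes "prob_space M" and "X0 \<in> borel_measurable M"
  shows
    "(\<forall>\<theta> :: int ^ 'n \<Rightarrow> 'a \<Rightarrow> 'a.
        mp_action M \<theta> \<and> measurable_field (count_space UNIV) M (field_of X0 \<theta>) \<and>
        associated M (field_of X0 \<theta>) \<longrightarrow>
        (ergodic_field (count_space UNIV) boxZ CARD('n) M \<theta> (field_of X0 \<theta>) \<longleftrightarrow>
         weakly_mixing_field (count_space UNIV) boxZ CARD('n) M \<theta> (field_of X0 \<theta>)))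
   \<and> (\<forall>\<theta> :: real ^ 'n \<Rightarrow> 'a \<Rightarrow> 'a.
        mp_action M \<theta> \<and> measurable_field lborel M (field_of X0 \<theta>) \<and>
        associated M (field_of X0 \<theta>) \<longrightarrow>
        (ergodic_field lborel boxR CARD('n) M \<theta> (field_of X0 \<theta>) \<longleftrightarrow>
         weakly_mixing_field lborel boxR CARD('n) M \<theta> (field_of X0 \<theta>)))"
proof (intro conjI allI impI)
  fix \<theta> :: "int ^ 'n \<Rightarrow> 'a \<Rightarrow> 'a"
  assume "mp_action M \<theta> \<and> measurable_field (count_space UNIV) M (field_of X0 \<theta>) \<and>
    associated M (field_of X0 \<theta>)"
  then interpret associated_field "count_space UNIV" boxZ "CARD('n)" M \<theta> X0
    by (intro associated_field.intro box_average_boxZ stationary_field.intro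
          stationary_field_axioms.intro associated_field_axioms.intro assms) auto
  show "ergodic_field (count_space UNIV) boxZ CARD('n) M \<theta> (field_of X0 \<theta>) \<longleftrightarrow>
    weakly_mixing_field (count_space UNIV) boxZ CARD('n) M \<theta> (field_of X0 \<theta>)"
    by (rule ergodic_iff_weakly_mixing)
next
  fix \<theta> :: "real ^ 'n \<Rightarrow> 'a \<Rightarrow> 'a"
  assume "mp_action M \<theta> \<and> measurable_field lborel M (field_of X0 \<theta>) \<and>
    associated M (field_of X0 \<theta>)"
  then interpret associated_field lborel boxR "CARD('n)" M \<theta> X0
    by (intro associated_field.intro box_average_boxR stationary_field.intro
          stationary_field_axioms.intro associated_field_axioms.intro assms) auto
  show "ergodic_field lborel boxR CARD('n) M \<theta> (field_of X0 \<theta>) \<longleftrightarrow>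
    weakly_mixing_field lborel boxR CARD('n) M \<theta> (field_of X0 \<theta>)"
    by (rule ergodic_iff_weakly_mixing)
qed

end
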